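(* For any $\xi\in(0,1)$ and $r\in(0,\pi/2)$ there exists $H=H(\xi,r)>0$ such that for all $\gamma\in B^\infty_{\rm ap}(\mathbb{R},\mathbb{R}^2)$ and all $f,g\in E_r(S^1)$: \begin{align*} \int_0^\pi\int_\alpha^\pi|p_{\alpha,\beta}(f)-p_{\alpha,\beta}(g)|\,d\beta\,d\alpha&\le H\|f-g\|_\infty^\xi,\\ |\omega_f(\gamma)-\omega_g(\gamma)|&\le H\|f-g\|_\infty^\xi,\\ \bigl|\|\omega_f\|_{\rm ir}-\|\omega_g\|_{\rm ir}\bigr|&\le H\|f-g\|_\infty^\xi,\\ \|\mu_{f,\gamma}-\mu_{g,\gamma}\|_\infty&\le H\|f-g\|_\infty^\xi. \end{align*}
   Context: $E(S^1)$ is the set of $1$-Lipschitz $f:\mathbb{R}\to\mathbb{R}$ (write $f_\alpha=f(\alpha)$) with $f_{\alpha+\pi}+f_\alpha=\pi$ for all $\alpha$, with the sup norm. $E_r(S^1)=\{f\in E(S^1):f_\alpha\in[r,\pi-r]\ \forall\alpha\}$. For $f\in E_r(S^1)$ and $\beta-\alpha\notin\pi\mathbb{Z}$, \[ p_{\alpha,\beta}(f)=\frac{1-\cos(\beta-\alpha)^2-\cos(f_\alpha)^2-\cos(f_\beta)^2+2\cos(\beta-\alpha)\cos(f_\alpha)\cos(f_\beta)}{\sin(\beta-\alpha)^2\sin(f_\alpha)^2\sin(f_\beta)^2}, \] and $q_{\alpha,\beta}(f)=\sin(f_\alpha)^2p_{\alpha,\beta}(f)$. For $v,w\in\mathbb{R}^2$,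 $v\times w=v_1w_2-v_2w_1$. $B^\infty_{\rm ap}(\mathbb{R},\mathbb{R}^2)$ is the set of measurable $\gamma:\mathbb{R}\to\mathbb{R}^2$ with $\gamma(\alpha+\pi)=-\gamma(\alpha)$ and $|\gamma(\alpha)|\le1$ a.e. Define \[ \omega_f(\gamma)=\int_0^\pi\int_\alpha^\pi p_{\alpha,\beta}(f)\,\gamma(\alpha)\times\gamma(\beta)\,d\beta\,d\alpha,\qquad \|\omega_f\|_{\rm ir}=\sup_{\gamma\in B^\infty_{\rm ap}(\mathbb{R},\mathbb{R}^2)}\omega_f(\gamma), \] and \[ \mu_{f,\gamma}(\alpha)=\int_\alpha^{\alpha+\pi}q_{\alpha,\beta}(f)\gamma(\beta)\,d\beta. \] *)

theory Defs
  imports "HOL-Analysis.Analysis"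
begin

definition E_S1 :: "(real \<Rightarrow> real) set" where
  "E_S1 = {f. (\<forall>x y. \<bar>f x - f y\<bar> \<le> \<bar>x - y\<bar>) \<and> (\<forall>a. f (a + pi) + f a = pi)}"

definition E_r :: "real \<Rightarrow> (real \<Rightarrow> real) set" where
  "E_r r = {f \<in> E_S1. \<forall>a. r \<le> f a \<and> f a \<le> pi - r}"

definition sup_dist :: "(real \<Rightarrow> real) \<Rightarrow> (real \<Rightarrow> real) \<Rightarrow> real" where
  "sup_dist f g = (SUP x. \<bar>f x - g x\<bar>)"

definition p_ab :: "(real \<Rightarrow> real) \<Rightarrow> real \<Rightarrow> real \<Rightarrow> real" where
  "p_ab f a b =
     (1 - (cos (b - a))\<^sup>2 - (cos (f a))\<^sup>2 - (cos (f b))\<^sup>2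
        + 2 * cos (b - a) * cos (f a) * cos (f b))
     / ((sin (b - a))\<^sup>2 * (sin (f a))\<^sup>2 * (sin (f b))\<^sup>2)"

definition q_ab :: "(real \<Rightarrow> real) \<Rightarrow> real \<Rightarrow> real \<Rightarrow> real" where
  "q_ab f a b = (sin (f a))\<^sup>2 * p_ab f a b"

definition cross2 :: "real \<times> real \<Rightarrow> real \<times> real \<Rightarrow> real" where
  "cross2 v w = fst v * snd w - snd v * fst w"

definition B_ap :: "(real \<Rightarrow> real \<times> real) set" where
  "B_ap = {\<gamma>. \<gamma> \<in> borel_measurable lebesgue \<and> (\<forall>a. \<gamma> (a + pi) = - \<gamma> a)
              \<and> (AE x in lebesgue. norm (\<gamma> x) \<le> 1)}"

definition omega :: "(real \<Rightarrow> real) \<Rightarrow> (real \<Rightarrow> real \<times> real) \<Rightarrow> real" where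
  "omega f \<gamma> = (LINT a:{0..pi}|lebesgue. (LINT b:{a..pi}|lebesgue. p_ab f a b * cross2 (\<gamma> a) (\<gamma> b)))"

definition omega_ir :: "(real \<Rightarrow> real) \<Rightarrow> real" where
  "omega_ir f = (SUP \<gamma>\<in>B_ap. omega f \<gamma>)"

definition mu :: "(real \<Rightarrow> real) \<Rightarrow> (real \<Rightarrow> real \<times> real) \<Rightarrow> real \<Rightarrow> real \<times> real" where
  "mu f \<gamma> a = (LINT b:{a..a+pi}|lebesgue. q_ab f a b *\<^sub>R \<gamma> b)"

end

theory Submission
  imports Defs
begin

text \<open>
  Write \<open>t = \<beta> - \<alpha>\<close>. The numerator of \<open>p\<^sub>\<alpha>\<^sub>,\<^sub>\<beta>(f)\<close> is the Gram determinant of three unit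
  vectors with mutual angles \<open>t\<close>, \<open>f\<^sub>\<alpha>\<close>, \<open>f\<^sub>\<beta>\<close>, and it factors as
  \<open>(cos (f\<^sub>\<alpha> - f\<^sub>\<beta>) - cos t) (cos (\<pi> - f\<^sub>\<alpha> - f\<^sub>\<beta>) + cos t)\<close>.
  Since \<open>f\<close> is 1-Lipschitz and \<open>f\<^sub>\<alpha>\<^sub>+\<^sub>\<pi> = \<pi> - f\<^sub>\<alpha>\<close>, we have \<open>|f\<^sub>\<alpha> - f\<^sub>\<beta>| \<le> t\<close> and
  \<open>|\<pi> - f\<^sub>\<alpha> - f\<^sub>\<beta>| \<le> \<pi> - t\<close>, so the two factors are nonnegative and of order \<open>t\<^sup>2\<close> and
  \<open>(\<pi> - t)\<^sup>2\<close>. This cancels the \<open>sin\<^sup>2 t\<close> in the denominator: \<open>p\<close> and \<open>q\<close> are bounded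
  uniformly on \<open>E\<^sub>r\<close>, while \<open>|p(f) - p(g)| = O(\<parallel>f - g\<parallel> / (t (\<pi> - t)))\<close>. Interpolating
  between the two bounds gives \<open>|p(f) - p(g)| \<le> K \<parallel>f - g\<parallel>\<^sup>\<xi> (t\<^sup>-\<^sup>\<xi> + (\<pi> - t)\<^sup>-\<^sup>\<xi>)\<close>,
  and the weight is integrable because \<open>\<xi> < 1\<close>. Integrating this estimate gives all four
  inequalities; the one for \<open>\<parallel>\<omega>\<parallel>\<^sub>i\<^sub>r\<close> follows by taking suprema over \<open>\<gamma>\<close>.
\<close>

section \<open>Trigonometric estimates\<close>

lemma sin_ge_half_arg:
  assumes "0 \<le> x" "x \<le> pi/2"
  shows "x/2 \<le> sin x"
proof (cases "x \<le> pi/3")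
  case True
  have "(\<lambda>y. y/2 - sin y) x \<le> (\<lambda>y. y/2 - sin y) 0"
  proof (rule deriv_nonpos_imp_antimono[where g = "\<lambda>y. y/2 - sin y" and g' = "\<lambda>y. 1/2 - cos y"])
    fix y assume y: "y \<in> {0..x}"
    show "((\<lambda>y. y/2 - sin y) has_real_derivative 1/2 - cos y) (at y)"
      by (auto intro!: derivative_eq_intros)
    have "cos (pi/3) \<le> cos y" using y True by (intro cos_monotone_0_pi_le) auto
    then show "1/2 - cos y \<le> 0" by (simp add: cos_60)
  qed (use assms in auto)
  then show ?thesis by simp
next
  case False
  have "sin (pi/3) \<le> sin x" using False assms by (intro sin_monotone_2pi_le) auto
  moreover have "x \<le> 1.6" using assms pi_approx by auto
  moreover have "1.6 \<le> sqrt 3" by (rule real_le_rsqrt) (simp add: power2_eq_square)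
  ultimately show ?thesis by (simp add: sin_60)
qed

lemma sin_ge_parabola:
  assumes "0 \<le> t" "t \<le> pi"
  shows "t * (pi - t) / (2*pi) \<le> sin t"
proof (cases "t \<le> pi/2")
  case True
  have "t * (pi - t) / (2*pi) \<le> t * pi / (2*pi)"
    using assms by (intro divide_right_mono mult_left_mono) auto
  moreover have "t * pi / (2*pi) = t/2" by simp
  ultimately show ?thesis using sin_ge_half_arg[of t] True assms by linarith
next
  case False
  have "t * (pi - t) / (2*pi) \<le> pi * (pi - t) / (2*pi)"
    using assms by (intro divide_right_mono mult_right_mono) auto
  moreover have "pi * (pi - t) / (2*pi) = (pi - t)/2" by simp
  moreover have "(pi - t)/2 \<le> sin (pi - t)" using False assms by (intro sin_ge_half_arg) auto
  ultimately show ?thesis by (simp only: sin_pi_minus)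
qed

lemma one_minus_cos_le: "1 - cos t \<le> (t::real)\<^sup>2 / 2"
proof -
  have "\<bar>sin (t/2)\<bar> \<le> \<bar>t/2\<bar>" by (rule abs_sin_x_le_abs_x)
  then have "(sin (t/2))\<^sup>2 \<le> (t/2)\<^sup>2" by (metis power2_abs power_mono abs_ge_zero)
  then show ?thesis using cos_double_sin[of "t/2"] by (simp add: power_divide)
qed

lemma abs_sin_diff_le: "\<bar>sin x - sin y\<bar> \<le> \<bar>x - y\<bar>" for x y :: real
proof -
  have "\<bar>sin x - sin y\<bar> = 2 * \<bar>sin ((x - y)/2)\<bar> * \<bar>cos ((x + y)/2)\<bar>"
    by (simp add: sin_diff_sin abs_mult)
  also have "\<dots> \<le> 2 * \<bar>(x - y)/2\<bar> * 1"
    by (intro mult_mono mult_left_mono abs_sin_x_le_abs_x) (auto simp: abs_cos_le_one)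
  finally show ?thesis by simp
qed

lemma abs_cos_diff_le:
  fixes u v t :: real
  assumes "\<bar>u\<bar> \<le> t" "\<bar>v\<bar> \<le> t"
  shows "\<bar>cos u - cos v\<bar> \<le> t * \<bar>u - v\<bar>"
proof -
  have "\<bar>cos u - cos v\<bar> = 2 * \<bar>sin ((u + v)/2)\<bar> * \<bar>sin ((v - u)/2)\<bar>"
    by (simp add: cos_diff_cos abs_mult)
  also have "\<dots> \<le> 2 * \<bar>(u + v)/2\<bar> * \<bar>(v - u)/2\<bar>"
    by (intro mult_mono mult_left_mono abs_sin_x_le_abs_x) auto
  also have "\<dots> = \<bar>u + v\<bar> * \<bar>u - v\<bar> / 2" by (simp add: abs_minus_commute)
  also have "\<dots> \<le> (2*t) * \<bar>u - v\<bar> / 2"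
    using assms by (intro divide_right_mono mult_right_mono) auto
  finally show ?thesis by simp
qed

lemma abs_sin_sq_diff_le: "\<bar>(sin x)\<^sup>2 - (sin y)\<^sup>2\<bar> \<le> 2 * \<bar>x - y\<bar>" for x y :: real
proof -
  have "\<bar>(sin x)\<^sup>2 - (sin y)\<^sup>2\<bar> = \<bar>sin x - sin y\<bar> * \<bar>sin x + sin y\<bar>"
    by (simp add: power2_eq_square abs_mult[symmetric] algebra_simps)
  also have "\<dots> \<le> \<bar>x - y\<bar> * 2"
  proof (rule mult_mono)
    show "\<bar>sin x + sin y\<bar> \<le> 2"
      using abs_triangle_ineq[of "sin x" "sin y"] abs_sin_le_one[of x] abs_sin_le_one[of y] by linarith
  qed (simp_all add: abs_sin_diff_le)
  finally show ?thesis by simp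
qed

lemma abs_sin_sq_prod_diff_le:
  fixes a a' b b' d :: real
  assumes "\<bar>a - a'\<bar> \<le> d" "\<bar>b - b'\<bar> \<le> d"
  shows "\<bar>(sin a)\<^sup>2 * (sin b)\<^sup>2 - (sin a')\<^sup>2 * (sin b')\<^sup>2\<bar> \<le> 4*d"
proof -
  have "(sin a)\<^sup>2 * (sin b)\<^sup>2 - (sin a')\<^sup>2 * (sin b')\<^sup>2
      = ((sin a)\<^sup>2 - (sin a')\<^sup>2) * (sin b)\<^sup>2 + (sin a')\<^sup>2 * ((sin b)\<^sup>2 - (sin b')\<^sup>2)"
    by (simp add: algebra_simps)
  also have "\<bar>\<dots>\<bar> \<le> \<bar>(sin a)\<^sup>2 - (sin a')\<^sup>2\<bar> * (sin b)\<^sup>2 + (sin a')\<^sup>2 * \<bar>(sin b)\<^sup>2 - (sin b')\<^sup>2\<bar>"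
    by (rule order_trans[OF abs_triangle_ineq]) (simp add: abs_mult)
  also have "\<dots> \<le> (2 * \<bar>a - a'\<bar>) * 1 + 1 * (2 * \<bar>b - b'\<bar>)"
    by (intro add_mono mult_mono abs_sin_sq_diff_le) (simp_all add: abs_square_le_1)
  finally show ?thesis using assms by simp
qed

lemma abs_cross2_le: "\<bar>cross2 v w\<bar> \<le> norm v * norm w"
proof -
  obtain v1 v2 w1 w2 where vw: "v = (v1, v2)" "w = (w1, w2)" by (cases v, cases w) auto
  have "(v1*w2 - v2*w1)\<^sup>2 + (v1*w1 + v2*w2)\<^sup>2 = (v1\<^sup>2 + v2\<^sup>2) * (w1\<^sup>2 + w2\<^sup>2)"
    by (simp add: power2_eq_square algebra_simps)
  then have "sqrt ((v1*w2 - v2*w1)\<^sup>2) \<le> sqrt ((v1\<^sup>2 + v2\<^sup>2) * (w1\<^sup>2 + w2\<^sup>2))"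
    by (intro real_sqrt_le_mono) (metis le_add_same_cancel1 zero_le_power2)
  then show ?thesis unfolding vw cross2_def by (simp add: norm_Pair real_sqrt_mult)
qed

section \<open>Pointwise bounds for the kernels\<close>

definition gram3 :: "real \<Rightarrow> real \<Rightarrow> real \<Rightarrow> real" where
  "gram3 A B t = 1 - (cos t)\<^sup>2 - (cos A)\<^sup>2 - (cos B)\<^sup>2 + 2 * cos t * cos A * cos B"

lemma gram3_factor: "gram3 A B t = (cos (A - B) - cos t) * (cos (pi - A - B) - cos (pi - t))"
proof -
  have "cos (pi - A - B) = sin A * sin B - cos A * cos B"
    using cos_pi_minus[of "A + B"] by (simp add: cos_add diff_diff_eq)
  moreover have "(sin A)\<^sup>2 = 1 - (cos A)\<^sup>2" "(sin B)\<^sup>2 = 1 - (cos B)\<^sup>2"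
    by (simp_all add: sin_squared_eq)
  ultimately show ?thesis unfolding gram3_def cos_diff[of A B] cos_pi_minus by algebra
qed

lemma cos_diff_cos_bounds:
  fixes D t :: real
  assumes "\<bar>D\<bar> \<le> t" "t \<le> pi"
  shows "0 \<le> cos D - cos t" "cos D - cos t \<le> t\<^sup>2/2"
proof -
  have "cos t \<le> cos \<bar>D\<bar>" using assms by (intro cos_monotone_0_pi_le) auto
  then show "0 \<le> cos D - cos t" by simp
  show "cos D - cos t \<le> t\<^sup>2/2" using one_minus_cos_le[of t] cos_le_one[of D] by linarith
qed

lemma gram3_bounds:
  fixes A1 B1 A2 B2 t d :: real
  assumes t: "0 < t" "t < pi"
    and chord1: "\<bar>A1 - B1\<bar> \<le> t" "\<bar>pi - A1 - B1\<bar> \<le> pi - t"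
    and chord2: "\<bar>A2 - B2\<bar> \<le> t" "\<bar>pi - A2 - B2\<bar> \<le> pi - t"
    and d: "\<bar>A1 - A2\<bar> \<le> d" "\<bar>B1 - B2\<bar> \<le> d"
  shows "\<bar>gram3 A1 B1 t\<bar> \<le> (t * (pi - t))\<^sup>2 / 4"
    and "\<bar>gram3 A1 B1 t - gram3 A2 B2 t\<bar> \<le> pi * d * (t * (pi - t))"
proof -
  define X1 where "X1 = cos (A1 - B1) - cos t"
  define X2 where "X2 = cos (A2 - B2) - cos t"
  define Y1 where "Y1 = cos (pi - A1 - B1) - cos (pi - t)"
  define Y2 where "Y2 = cos (pi - A2 - B2) - cos (pi - t)"
  have gram: "gram3 A1 B1 t = X1 * Y1" "gram3 A2 B2 t = X2 * Y2"
    unfolding X1_def Y1_def X2_def Y2_def by (rule gram3_factor)+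
  have X1: "0 \<le> X1" "X1 \<le> t\<^sup>2/2" and X2: "0 \<le> X2" "X2 \<le> t\<^sup>2/2"
    unfolding X1_def X2_def
    using cos_diff_cos_bounds[OF chord1(1)] cos_diff_cos_bounds[OF chord2(1)] t by auto
  have Y1: "0 \<le> Y1" "Y1 \<le> (pi - t)\<^sup>2/2" and Y2: "0 \<le> Y2" "Y2 \<le> (pi - t)\<^sup>2/2"
    unfolding Y1_def Y2_def
    using cos_diff_cos_bounds[OF chord1(2)] cos_diff_cos_bounds[OF chord2(2)] t by auto
  have "X1 * Y1 \<le> (t\<^sup>2/2) * ((pi - t)\<^sup>2/2)" using X1 Y1 by (intro mult_mono) auto
  then show "\<bar>gram3 A1 B1 t\<bar> \<le> (t * (pi - t))\<^sup>2 / 4"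
    using X1 Y1 by (simp add: gram power_mult_distrib)
  have dX: "\<bar>X1 - X2\<bar> \<le> t * (2*d)"
  proof -
    have "\<bar>X1 - X2\<bar> = \<bar>cos (A1 - B1) - cos (A2 - B2)\<bar>" by (simp add: X1_def X2_def)
    also have "\<dots> \<le> t * \<bar>(A1 - B1) - (A2 - B2)\<bar>" using chord1 chord2 by (intro abs_cos_diff_le)
    also have "\<dots> \<le> t * (2*d)" using d t by (intro mult_left_mono) auto
    finally show ?thesis .
  qed
  have dY: "\<bar>Y1 - Y2\<bar> \<le> (pi - t) * (2*d)"
  proof -
    have "\<bar>Y1 - Y2\<bar> = \<bar>cos (pi - A1 - B1) - cos (pi - A2 - B2)\<bar>" by (simp add: Y1_def Y2_def)
    also have "\<dots> \<le> (pi - t) * \<bar>(pi - A1 - B1) - (pi - A2 - B2)\<bar>"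
      using chord1 chord2 by (intro abs_cos_diff_le)
    also have "\<dots> \<le> (pi - t) * (2*d)" using d t by (intro mult_left_mono) auto
    finally show ?thesis .
  qed
  have "\<bar>X1 * Y1 - X2 * Y2\<bar> = \<bar>(X1 - X2) * Y1 + X2 * (Y1 - Y2)\<bar>" by (simp add: algebra_simps)
  also have "\<dots> \<le> \<bar>X1 - X2\<bar> * Y1 + X2 * \<bar>Y1 - Y2\<bar>"
    using X2 Y1 by (intro order_trans[OF abs_triangle_ineq]) (simp add: abs_mult)
  also have "\<dots> \<le> (t * (2*d)) * ((pi - t)\<^sup>2/2) + (t\<^sup>2/2) * ((pi - t) * (2*d))"
    using dX dY X2 Y1 t abs_ge_zero[of "A1 - A2"] d(1) by (intro add_mono mult_mono) auto
  also have "\<dots> = pi * d * (t * (pi - t))" by (simp add: power2_eq_square field_simps)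
  finally show "\<bar>gram3 A1 B1 t - gram3 A2 B2 t\<bar> \<le> pi * d * (t * (pi - t))"
    by (simp add: gram)
qed

lemma le_powr_interpolation:
  fixes x a b \<xi> :: real
  assumes "0 \<le> x" "x \<le> a" "x \<le> b" "0 \<le> \<xi>" "\<xi> \<le> 1"
  shows "x \<le> a powr (1 - \<xi>) * b powr \<xi>"
proof (cases "x = 0")
  case False
  then have "x = x powr (1 - \<xi>) * x powr \<xi>"
    using assms by (simp add: powr_add[symmetric])
  also have "\<dots> \<le> a powr (1 - \<xi>) * b powr \<xi>"
    using assms by (intro mult_mono powr_mono2) auto
  finally show ?thesis .
qed simp

lemma abs_quotient_le:
  fixes N V s m v0 :: real
  assumes "0 < m" "m / (2*pi) \<le> s" "\<bar>N\<bar> \<le> m\<^sup>2/4" "0 < v0" "v0 \<le> V"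
  shows "\<bar>N / (s\<^sup>2 * V)\<bar> \<le> pi\<^sup>2 / v0"
proof -
  have "(m / (2*pi))\<^sup>2 * v0 \<le> s\<^sup>2 * V"
    using assms by (intro mult_mono power_mono) auto
  moreover have "0 < (m / (2*pi))\<^sup>2 * v0" using assms by simp
  ultimately have "\<bar>N\<bar> / (s\<^sup>2 * V) \<le> (m\<^sup>2/4) / ((m / (2*pi))\<^sup>2 * v0)"
    using assms(3) by (intro frac_le) auto
  also have "\<dots> = pi\<^sup>2 / v0" using assms by (simp add: power2_eq_square field_simps)
  finally show ?thesis using assms by (simp add: abs_divide abs_mult)
qed

lemma abs_quotient_diff_le:
  fixes N1 N2 V1 V2 s m d v0 :: real
  assumes m: "0 < m" "m \<le> pi\<^sup>2" "m / (2*pi) \<le> s"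
    and N: "\<bar>N1\<bar> \<le> m\<^sup>2/4" "\<bar>N1 - N2\<bar> \<le> pi * d * m"
    and V: "0 < v0" "v0 \<le> V1" "v0 \<le> V2" "V1 \<le> 1" "\<bar>V1 - V2\<bar> \<le> 4*d"
  shows "\<bar>N1 / (s\<^sup>2 * V1) - N2 / (s\<^sup>2 * V2)\<bar> \<le> 4 * pi\<^sup>2 * (pi\<^sup>2 + pi) / v0\<^sup>2 * d / m"
proof -
  have d: "0 \<le> d" using V(5) by linarith
  have s: "0 < s" using m(3) divide_pos_pos[OF m(1), of "2*pi"] by simp
  have "\<bar>N1 * V2 - N2 * V1\<bar> = \<bar>N1 * (V2 - V1) + V1 * (N1 - N2)\<bar>" by (simp add: algebra_simps)
  also have "\<dots> \<le> \<bar>N1\<bar> * \<bar>V2 - V1\<bar> + V1 * \<bar>N1 - N2\<bar>"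
    using V by (intro order_trans[OF abs_triangle_ineq]) (simp add: abs_mult)
  also have "\<dots> \<le> (m\<^sup>2/4) * (4*d) + 1 * (pi * d * m)"
    using N V by (intro add_mono mult_mono) (auto simp: abs_minus_commute)
  also have "\<dots> \<le> (pi\<^sup>2 + pi) * d * m"
    using mult_right_mono[OF m(2), of "m * d"] m d by (simp add: power2_eq_square algebra_simps)
  finally have numer: "\<bar>N1 * V2 - N2 * V1\<bar> \<le> (pi\<^sup>2 + pi) * d * m" .
  have "(m / (2*pi))\<^sup>2 * v0\<^sup>2 \<le> s\<^sup>2 * (V1 * V2)"
    using m V unfolding power2_eq_square[of v0] by (intro mult_mono power_mono) auto
  moreover have "0 < (m / (2*pi))\<^sup>2 * v0\<^sup>2" using m V by simp
  ultimately have "\<bar>N1 * V2 - N2 * V1\<bar> / (s\<^sup>2 * (V1 * V2))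
      \<le> ((pi\<^sup>2 + pi) * d * m) / ((m / (2*pi))\<^sup>2 * v0\<^sup>2)"
    using numer by (intro frac_le) auto
  also have "\<dots> = 4 * pi\<^sup>2 * (pi\<^sup>2 + pi) / v0\<^sup>2 * d / m"
    using m V by (simp add: power2_eq_square field_simps)
  finally show ?thesis
    using s V by (simp add: abs_divide abs_mult field_simps)
qed

definition edge_weight :: "real \<Rightarrow> real \<Rightarrow> real" where
  "edge_weight \<xi> t = (if 0 < t \<and> t < pi then t powr (-\<xi>) + (pi - t) powr (-\<xi>) else 0)"

lemma edge_weight_nonneg: "0 \<le> edge_weight \<xi> t"
  by (simp add: edge_weight_def)

lemma powr_neg_le_edge_weight:
  assumes "0 < t" "t < pi" "0 < \<xi>"
  shows "(t * (pi - t)) powr (-\<xi>) \<le> edge_weight \<xi> t"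
proof -
  have "min t (pi - t) \<le> t * (pi - t)"
    using assms pi_gt3 by (auto simp: min_def mult_le_cancel_left1 mult_le_cancel_right1)
  then have "(t * (pi - t)) powr (-\<xi>) \<le> (min t (pi - t)) powr (-\<xi>)"
    using assms by (intro powr_mono2') auto
  also have "\<dots> \<le> t powr (-\<xi>) + (pi - t) powr (-\<xi>)" by (simp add: min_def)
  finally show ?thesis using assms by (simp add: edge_weight_def)
qed

lemma gram3_quotient_estimates:
  fixes A1 B1 A2 B2 V1 V2 t d \<xi> v0 :: real
  assumes xi: "0 < \<xi>" "\<xi> < 1" and t: "0 < t" "t < pi"
    and chord1: "\<bar>A1 - B1\<bar> \<le> t" "\<bar>pi - A1 - B1\<bar> \<le> pi - t"
    and chord2: "\<bar>A2 - B2\<bar> \<le> t" "\<bar>pi - A2 - B2\<bar> \<le> pi - t"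
    and d: "\<bar>A1 - A2\<bar> \<le> d" "\<bar>B1 - B2\<bar> \<le> d"
    and V: "0 < v0" "v0 \<le> V1" "v0 \<le> V2" "V1 \<le> 1" "V2 \<le> 1" "\<bar>V1 - V2\<bar> \<le> 4*d"
  shows "\<bar>gram3 A1 B1 t / ((sin t)\<^sup>2 * V1)\<bar> \<le> pi\<^sup>2 / v0"
    and "\<bar>gram3 A1 B1 t / ((sin t)\<^sup>2 * V1) - gram3 A2 B2 t / ((sin t)\<^sup>2 * V2)\<bar>
         \<le> (2 * (pi\<^sup>2 / v0)) powr (1 - \<xi>) * (4 * pi\<^sup>2 * (pi\<^sup>2 + pi) / v0\<^sup>2) powr \<xi>
            * d powr \<xi> * edge_weight \<xi> t"
proof -
  define m where "m = t * (pi - t)"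
  define C where "C = 4 * pi\<^sup>2 * (pi\<^sup>2 + pi) / v0\<^sup>2"
  define q1 where "q1 = gram3 A1 B1 t / ((sin t)\<^sup>2 * V1)"
  define q2 where "q2 = gram3 A2 B2 t / ((sin t)\<^sup>2 * V2)"
  have m: "0 < m" "m \<le> pi\<^sup>2" "m / (2*pi) \<le> sin t"
    using t sin_ge_parabola[of t] unfolding m_def power2_eq_square by (auto intro: mult_mono)
  have d0: "0 \<le> d" using d by linarith
  have gram1: "\<bar>gram3 A1 B1 t\<bar> \<le> m\<^sup>2/4" "\<bar>gram3 A1 B1 t - gram3 A2 B2 t\<bar> \<le> pi * d * m"
    and gram2: "\<bar>gram3 A2 B2 t\<bar> \<le> m\<^sup>2/4"
    using gram3_bounds[OF t chord1 chord2 d] gram3_bounds[OF t chord2 chord1] d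
    unfolding m_def by (auto simp: abs_minus_commute)
  show q1: "\<bar>gram3 A1 B1 t / ((sin t)\<^sup>2 * V1)\<bar> \<le> pi\<^sup>2 / v0"
    using abs_quotient_le[OF m(1,3) gram1(1) V(1,2)] .
  have q2: "\<bar>q2\<bar> \<le> pi\<^sup>2 / v0"
    unfolding q2_def using abs_quotient_le[OF m(1,3) gram2 V(1,3)] .
  have "\<bar>q1 - q2\<bar> \<le> 2 * (pi\<^sup>2 / v0)" using q1 q2 unfolding q1_def abs_le_iff by linarith
  moreover have "\<bar>q1 - q2\<bar> \<le> C * d / m"
    unfolding q1_def q2_def C_def using abs_quotient_diff_le[OF m gram1 V(1-4,6)] .
  ultimately have "\<bar>q1 - q2\<bar> \<le> (2 * (pi\<^sup>2 / v0)) powr (1 - \<xi>) * (C * d / m) powr \<xi>"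
    using xi by (intro le_powr_interpolation) auto
  also have "(C * d / m) powr \<xi> = C powr \<xi> * d powr \<xi> * m powr (-\<xi>)"
    using m d0 V(1) by (simp add: C_def powr_divide powr_mult powr_minus_divide)
  also have "m powr (-\<xi>) \<le> edge_weight \<xi> t"
    unfolding m_def using powr_neg_le_edge_weight t xi by simp
  finally show "\<bar>q1 - q2\<bar> \<le> (2 * (pi\<^sup>2 / v0)) powr (1 - \<xi>) * C powr \<xi> * d powr \<xi> * edge_weight \<xi> t"
    by (simp add: mult_left_mono mult.assoc)
qed

lemma E_rD:
  assumes "f \<in> E_r r"
  shows "\<bar>f x - f y\<bar> \<le> \<bar>x - y\<bar>" "f (x + pi) + f x = pi" "r \<le> f x" "f x \<le> pi - r"
  using assms unfolding E_r_def E_S1_def by auto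

lemma E_r_borel_measurable:
  assumes "f \<in> E_r r"
  shows "f \<in> borel_measurable borel"
proof -
  have "lipschitz_on 1 UNIV f"
    using E_rD(1)[OF assms] by (intro lipschitz_onI) (auto simp: dist_real_def)
  then show ?thesis
    by (intro borel_measurable_continuous_onI lipschitz_on_continuous_on)
qed

lemma E_r_chord_bounds:
  assumes "h \<in> E_r r" "a \<le> b" "b \<le> a + pi"
  shows "\<bar>h a - h b\<bar> \<le> b - a" "\<bar>pi - h a - h b\<bar> \<le> pi - (b - a)"
proof -
  show "\<bar>h a - h b\<bar> \<le> b - a" using E_rD(1)[OF assms(1), of a b] assms by simp
  have "pi - h a - h b = h (b - pi) - h a"
    using E_rD(2)[OF assms(1), of "b - pi"] by simp
  also have "\<bar>\<dots>\<bar> \<le> \<bar>(b - pi) - a\<bar>" by (rule E_rD(1)[OF assms(1)])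
  finally show "\<bar>pi - h a - h b\<bar> \<le> pi - (b - a)" using assms by simp
qed

lemma sin_le_sin_E_r:
  assumes "h \<in> E_r r" "0 < r" "r < pi/2"
  shows "sin r \<le> sin (h x)"
proof -
  have "r \<le> h x" "h x \<le> pi - r" using E_rD(3,4)[OF assms(1)] by auto
  then show ?thesis
    using assms sin_monotone_2pi_le[of r "h x"] sin_monotone_2pi_le[of r "pi - h x"]
    by (cases "h x \<le> pi/2") auto
qed

lemma sin_pow4_le_sin_sq_E_r:
  assumes "h \<in> E_r r" "0 < r" "r < pi/2"
  shows "sin r ^ 4 \<le> (sin (h a))\<^sup>2 * (sin (h b))\<^sup>2" "sin r ^ 4 \<le> (sin (h b))\<^sup>2"
proof -
  have "0 < sin r" using assms by (intro sin_gt_zero) auto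
  then have sin_sq: "(sin r)\<^sup>2 \<le> (sin (h x))\<^sup>2" for x
    using sin_le_sin_E_r[OF assms] by (intro power_mono) auto
  have "sin r ^ 4 = (sin r)\<^sup>2 * (sin r)\<^sup>2" by simp
  also have "\<dots> \<le> (sin (h a))\<^sup>2 * (sin (h b))\<^sup>2" by (intro mult_mono sin_sq) auto
  finally show "sin r ^ 4 \<le> (sin (h a))\<^sup>2 * (sin (h b))\<^sup>2" .
  have "sin r ^ 4 \<le> (sin r)\<^sup>2"
    using power_decreasing[of 2 4 "\<bar>sin r\<bar>"] abs_sin_le_one[of r] by (simp add: power_abs)
  then show "sin r ^ 4 \<le> (sin (h b))\<^sup>2" using sin_sq[of b] by linarith
qed

lemma abs_le_sup_dist:
  assumes "f \<in> E_r r" "g \<in> E_r r"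
  shows "\<bar>f x - g x\<bar> \<le> sup_dist f g"
proof -
  have "\<bar>f y - g y\<bar> \<le> pi - 2*r" for y
    using E_rD(3,4)[OF assms(1), of y] E_rD(3,4)[OF assms(2), of y] by (simp add: abs_le_iff)
  then have "bdd_above (range (\<lambda>y. \<bar>f y - g y\<bar>))" by (intro bdd_aboveI2)
  then show ?thesis unfolding sup_dist_def by (intro cSUP_upper) auto
qed

lemma p_ab_eq_gram3:
  "p_ab h a b = gram3 (h a) (h b) (b - a) / ((sin (b - a))\<^sup>2 * ((sin (h a))\<^sup>2 * (sin (h b))\<^sup>2))"
  unfolding p_ab_def gram3_def by (simp add: mult.assoc)

lemma q_ab_eq_gram3:
  assumes "sin (h a) \<noteq> 0"
  shows "q_ab h a b = gram3 (h a) (h b) (b - a) / ((sin (b - a))\<^sup>2 * (sin (h b))\<^sup>2)"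
  using assms unfolding q_ab_def p_ab_eq_gram3 by (simp add: field_simps)

lemma E_r_kernel_estimates_at:
  assumes r: "0 < r" "r < pi/2" and xi: "0 < \<xi>" "\<xi> < 1"
    and fg: "f \<in> E_r r" "g \<in> E_r r" and ab: "a \<le> b" "b \<le> a + pi"
  defines "K \<equiv> (2 * (pi\<^sup>2 / sin r ^ 4)) powr (1 - \<xi>) * (4 * pi\<^sup>2 * (pi\<^sup>2 + pi) / (sin r ^ 4)\<^sup>2) powr \<xi>"
  shows "\<bar>p_ab f a b\<bar> \<le> pi\<^sup>2 / sin r ^ 4" "\<bar>q_ab f a b\<bar> \<le> pi\<^sup>2 / sin r ^ 4"
    and "\<bar>p_ab f a b - p_ab g a b\<bar> \<le> K * sup_dist f g powr \<xi> * edge_weight \<xi> (b - a)"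
    and "\<bar>q_ab f a b - q_ab g a b\<bar> \<le> K * sup_dist f g powr \<xi> * edge_weight \<xi> (b - a)"
proof -
  define t where "t = b - a"
  define d where "d = sup_dist f g"
  have "0 < sin r" using r by (intro sin_gt_zero) auto
  have bounds_nonneg: "0 \<le> pi\<^sup>2 / sin r ^ 4" "0 \<le> K * d powr \<xi> * edge_weight \<xi> t"
    by (simp_all add: K_def edge_weight_nonneg)
  consider "sin t = 0" | "0 < t" "t < pi"
    using ab unfolding t_def by (cases "b - a = 0 \<or> b - a = pi") auto
  then have "\<bar>p_ab f a b\<bar> \<le> pi\<^sup>2 / sin r ^ 4 \<and> \<bar>q_ab f a b\<bar> \<le> pi\<^sup>2 / sin r ^ 4
      \<and> \<bar>p_ab f a b - p_ab g a b\<bar> \<le> K * d powr \<xi> * edge_weight \<xi> t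
      \<and> \<bar>q_ab f a b - q_ab g a b\<bar> \<le> K * d powr \<xi> * edge_weight \<xi> t"
  proof cases
    case 1
    \<comment> \<open>the denominators vanish, so \<open>p_ab\<close> and \<open>q_ab\<close> are \<open>0\<close> by the convention \<open>x / 0 = 0\<close>\<close>
    then show ?thesis using bounds_nonneg by (simp add: p_ab_def q_ab_def t_def)
  next
    case 2
    have dd: "\<bar>f a - g a\<bar> \<le> d" "\<bar>f b - g b\<bar> \<le> d"
      unfolding d_def using abs_le_sup_dist[OF fg] by auto
    note V = sin_pow4_le_sin_sq_E_r[OF _ r]
    have sin_sq_le_1: "(sin x)\<^sup>2 \<le> 1" "(sin x)\<^sup>2 * (sin y)\<^sup>2 \<le> 1" for x y :: real
      by (simp_all add: abs_square_le_1 mult_le_one)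
    have "\<bar>(sin (f b))\<^sup>2 - (sin (g b))\<^sup>2\<bar> \<le> 4*d"
      by (rule order_trans[OF abs_sin_sq_diff_le]) (use dd(2) in simp)
    note estimates = gram3_quotient_estimates[OF xi 2
        E_r_chord_bounds[OF fg(1) ab, folded t_def] E_r_chord_bounds[OF fg(2) ab, folded t_def] dd]
    note p_est = estimates[OF _ V(1)[OF fg(1)] V(1)[OF fg(2)] sin_sq_le_1(2) sin_sq_le_1(2)
        abs_sin_sq_prod_diff_le[OF dd]]
    note q_est = estimates[OF _ V(2)[OF fg(1)] V(2)[OF fg(2)] sin_sq_le_1(1) sin_sq_le_1(1)
        \<open>\<bar>(sin (f b))\<^sup>2 - (sin (g b))\<^sup>2\<bar> \<le> 4*d\<close>]
    have "sin (h a) \<noteq> 0" if "h \<in> E_r r" for h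
      using sin_le_sin_E_r[OF that r, of a] \<open>0 < sin r\<close> by linarith
    then show ?thesis
      using p_est q_est \<open>0 < sin r\<close>
      unfolding p_ab_eq_gram3 t_def K_def by (simp add: q_ab_eq_gram3 fg)
  qed
  then show "\<bar>p_ab f a b\<bar> \<le> pi\<^sup>2 / sin r ^ 4" "\<bar>q_ab f a b\<bar> \<le> pi\<^sup>2 / sin r ^ 4"
    "\<bar>p_ab f a b - p_ab g a b\<bar> \<le> K * sup_dist f g powr \<xi> * edge_weight \<xi> (b - a)"
    "\<bar>q_ab f a b - q_ab g a b\<bar> \<le> K * sup_dist f g powr \<xi> * edge_weight \<xi> (b - a)"
    unfolding t_def d_def by auto
qed

section \<open>Measure-theoretic tools\<close>

lemma sigma_finite_lebesgue: "sigma_finite_measure (lebesgue :: 'a::euclidean_space measure)"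
proof
  have "(\<Union>n::nat. cball (0::'a) (real n)) = UNIV"
    by (auto simp: real_arch_simple)
  then show "\<exists>A::'a set set. countable A \<and> A \<subseteq> sets lebesgue \<and> \<Union>A = space lebesgue
      \<and> (\<forall>a\<in>A. emeasure lebesgue a \<noteq> \<infinity>)"
    by (intro exI[of _ "range (\<lambda>n::nat. cball 0 (real n))"])
       (use lmeasurable_cball[THEN fmeasurableD] lmeasurable_cball[THEN fmeasurableD2] in auto)
qed

lemma measurable_lebesgue_pair_measure:
  assumes "f \<in> (borel \<Otimes>\<^sub>M borel :: ('a::euclidean_space \<times> 'b::euclidean_space) measure) \<rightarrow>\<^sub>M N"
  shows "f \<in> lebesgue \<Otimes>\<^sub>M lebesgue \<rightarrow>\<^sub>M N"
proof -
  have "(\<lambda>x. x) \<in> (lebesgue :: 'a measure) \<rightarrow>\<^sub>M borel" "(\<lambda>x. x) \<in> (lebesgue :: 'b measure) \<rightarrow>\<^sub>M borel"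
    by (simp_all add: measurable_completion)
  then have "(\<lambda>x. (fst x, snd x)) \<in> lebesgue \<Otimes>\<^sub>M lebesgue \<rightarrow>\<^sub>M (borel \<Otimes>\<^sub>M borel :: ('a \<times> 'b) measure)"
    by measurable
  then show ?thesis using measurable_compose[OF _ assms] by simp
qed

lemma p_ab_q_ab_measurable:
  assumes [measurable]: "h \<in> borel_measurable borel"
  shows "(\<lambda>x. p_ab h (fst x) (snd x)) \<in> borel_measurable (lebesgue \<Otimes>\<^sub>M lebesgue)"
    and "(\<lambda>x. q_ab h (fst x) (snd x)) \<in> borel_measurable (lebesgue \<Otimes>\<^sub>M lebesgue)"
proof -
  have "(\<lambda>x. p_ab h (fst x) (snd x)) \<in> borel_measurable (borel \<Otimes>\<^sub>M borel)"
    and "(\<lambda>x. q_ab h (fst x) (snd x)) \<in> borel_measurable (borel \<Otimes>\<^sub>M borel)"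
    unfolding q_ab_def p_ab_def by measurable
  then show "(\<lambda>x. p_ab h (fst x) (snd x)) \<in> borel_measurable (lebesgue \<Otimes>\<^sub>M lebesgue)"
    and "(\<lambda>x. q_ab h (fst x) (snd x)) \<in> borel_measurable (lebesgue \<Otimes>\<^sub>M lebesgue)"
    by (auto intro: measurable_lebesgue_pair_measure)
qed

lemma cross2_measurable:
  assumes "\<gamma> \<in> borel_measurable M" "\<delta> \<in> borel_measurable M"
  shows "(\<lambda>x. cross2 (\<gamma> x) (\<delta> x)) \<in> borel_measurable M"
  using assms by (rule borel_measurable_continuous_Pair) (unfold cross2_def, intro continuous_intros)

lemma norm_set_integral_le_nn_integral:
  fixes F :: "'a \<Rightarrow> 'b::{banach, second_countable_topology}"
  assumes "set_integrable M S F" "AE x in M. x \<in> S \<longrightarrow> norm (F x) \<le> w x"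
    and "(\<integral>\<^sup>+x\<in>S. ennreal (w x) \<partial>M) \<le> ennreal B" "0 \<le> B"
  shows "norm (LINT x:S|M. F x) \<le> B"
proof -
  have "ennreal (norm (LINT x:S|M. F x)) \<le> (\<integral>\<^sup>+x. ennreal (norm (indicator S x *\<^sub>R F x)) \<partial>M)"
    using integral_norm_bound_ennreal assms(1)
    unfolding set_integrable_def set_lebesgue_integral_def by blast
  also have "\<dots> \<le> (\<integral>\<^sup>+x\<in>S. ennreal (w x) \<partial>M)"
    using assms(2) by (intro nn_integral_mono_AE) (auto simp: indicator_def ennreal_leI elim!: eventually_mono)
  also have "\<dots> \<le> ennreal B" by (rule assms(3))
  finally show ?thesis using assms(4) by simp
qed

lemma set_integrable_bounded:
  fixes F :: "'a::euclidean_space \<Rightarrow> 'b::{banach, second_countable_topology}"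
  assumes "F \<in> borel_measurable lebesgue" "S \<in> lmeasurable"
    and "AE x in lebesgue. x \<in> S \<longrightarrow> norm (F x) \<le> C"
  shows "set_integrable lebesgue S F"
proof (rule set_integrable_bound[OF absolutely_integrable_on_const[OF assms(2), of C]])
  show "set_borel_measurable lebesgue S F"
    using assms(1,2) unfolding set_borel_measurable_def
    by (intro borel_measurable_scaleR borel_measurable_indicator) auto
  show "AE x in lebesgue. x \<in> S \<longrightarrow> norm (F x) \<le> norm C"
    using assms(3) by eventually_elim auto
qed

lemma nn_integral_powr_neg_interval:
  fixes \<xi> c :: real
  assumes "0 < \<xi>" "\<xi> < 1" "0 \<le> c"
  shows "(\<integral>\<^sup>+t\<in>{0<..<c}. ennreal (t powr (-\<xi>)) \<partial>lebesgue) = ennreal (c powr (1 - \<xi>) / (1 - \<xi>))"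
proof -
  have "((\<lambda>t. t powr (-\<xi>)) has_integral (c powr (1 - \<xi>) / (1 - \<xi>))) {0..c}"
    using has_integral_powr_from_0[of "-\<xi>" c] assms by simp
  then have "((\<lambda>t. t powr (-\<xi>)) has_integral (c powr (1 - \<xi>) / (1 - \<xi>))) {0<..<c}"
    using has_integral_open_interval[of "\<lambda>t. t powr (-\<xi>)" _ 0 c] by simp
  then show ?thesis
    by (subst nn_integral_completion) (auto intro: nn_integral_has_integral_lebesgue')
qed

lemma nn_integral_reflect_interval:
  fixes f :: "real \<Rightarrow> real"
  assumes [measurable]: "f \<in> borel_measurable borel"
  shows "(\<integral>\<^sup>+t\<in>{0<..<c}. ennreal (f (c - t)) \<partial>lebesgue) = (\<integral>\<^sup>+t\<in>{0<..<c}. ennreal (f t) \<partial>lebesgue)"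
proof -
  have "(\<lambda>t. ennreal (f (c - t)) * indicator {0<..<c} t) \<in> borel_measurable lebesgue"
    by (intro measurable_completion)
       (measurable, auto intro!: open_Collect_conj open_Collect_less continuous_intros)
  from nn_integral_real_affine_lebesgue[where c="-1" and t=c, OF this]
  show ?thesis by (simp add: indicator_def conj_commute)
qed

lemma nn_integral_translate_lebesgue:
  fixes w :: "real \<Rightarrow> real"
  assumes [measurable]: "w \<in> borel_measurable borel"
  shows "(\<integral>\<^sup>+b. ennreal (w (b - a)) \<partial>lebesgue) = (\<integral>\<^sup>+t. ennreal (w t) \<partial>lebesgue)"
proof -
  have "(\<lambda>b. ennreal (w (b - a))) \<in> borel_measurable lebesgue"
    by (intro measurable_completion) measurable
  from nn_integral_real_affine_lebesgue[where c=1 and t=a, OF this] show ?thesis by simp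
qed

lemma edge_weight_measurable [measurable]: "edge_weight \<xi> \<in> borel_measurable borel"
  unfolding edge_weight_def by measurable

lemma nn_integral_edge_weight:
  assumes "0 < \<xi>" "\<xi> < 1"
  shows "(\<integral>\<^sup>+t. ennreal (edge_weight \<xi> t) \<partial>lebesgue) = ennreal (2 * (pi powr (1 - \<xi>) / (1 - \<xi>)))"
proof -
  have "(\<integral>\<^sup>+t. ennreal (edge_weight \<xi> t) \<partial>lebesgue)
      = (\<integral>\<^sup>+t\<in>{0<..<pi}. ennreal (t powr (-\<xi>)) \<partial>lebesgue)
        + (\<integral>\<^sup>+t\<in>{0<..<pi}. ennreal ((pi - t) powr (-\<xi>)) \<partial>lebesgue)"
    by (subst nn_integral_add[symmetric])
       (auto intro!: nn_integral_cong measurable_completion simp: edge_weight_def indicator_def ennreal_plus)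
  also have "\<dots> = ennreal (pi powr (1 - \<xi>) / (1 - \<xi>)) + ennreal (pi powr (1 - \<xi>) / (1 - \<xi>))"
    using nn_integral_reflect_interval[of "\<lambda>t. t powr (-\<xi>)" pi] nn_integral_powr_neg_interval[OF assms]
    by simp
  also have "\<dots> = ennreal (2 * (pi powr (1 - \<xi>) / (1 - \<xi>)))"
    using assms by (simp add: ennreal_plus[symmetric] del: ennreal_plus)
  finally show ?thesis .
qed

lemma nn_set_integral_translated_weight_le:
  fixes w :: "real \<Rightarrow> real"
  assumes "w \<in> borel_measurable borel" "\<And>t. 0 \<le> w t"
    and "(\<integral>\<^sup>+t. ennreal (w t) \<partial>lebesgue) \<le> ennreal J" "0 \<le> D" "0 \<le> J"
  shows "(\<integral>\<^sup>+b\<in>S. ennreal (D * w (b - a)) \<partial>lebesgue) \<le> ennreal (D * J)"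
proof -
  have "(\<integral>\<^sup>+b\<in>S. ennreal (D * w (b - a)) \<partial>lebesgue) \<le> (\<integral>\<^sup>+b. ennreal D * ennreal (w (b - a)) \<partial>lebesgue)"
    using assms(2,4) by (intro nn_integral_mono) (simp add: indicator_def ennreal_mult)
  also have "\<dots> = ennreal D * (\<integral>\<^sup>+t. ennreal (w t) \<partial>lebesgue)"
    using assms(1) by (simp add: nn_integral_cmult measurable_completion nn_integral_translate_lebesgue)
  also have "\<dots> \<le> ennreal (D * J)"
    using assms(3-5) by (simp add: ennreal_mult mult_left_mono)
  finally show ?thesis .
qed

lemma nn_set_integral_const_interval_le:
  assumes "0 \<le> c" "b - a \<le> L" "0 \<le> L"
  shows "(\<integral>\<^sup>+x\<in>{a..b}. ennreal c \<partial>lebesgue) \<le> ennreal (c * L)"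
proof -
  have "(\<integral>\<^sup>+x\<in>{a..b}. ennreal c \<partial>lebesgue) = ennreal c * emeasure lebesgue {a..b}"
    by (simp add: nn_integral_cmult_indicator)
  also have "emeasure lebesgue {a..b} \<le> ennreal L"
    using assms by (cases "a \<le> b") auto
  finally show ?thesis
    using assms(1,3) by (simp add: ennreal_mult mult_left_mono)
qed

lemma B_apD:
  assumes "\<gamma> \<in> B_ap"
  shows "\<gamma> \<in> borel_measurable lebesgue" "AE x in lebesgue. norm (\<gamma> x) \<le> 1"
  using assms unfolding B_ap_def by auto

section \<open>Integral operators with bounded kernels\<close>

definition omega_inner :: "(real \<Rightarrow> real \<Rightarrow> real) \<Rightarrow> (real \<Rightarrow> real \<times> real) \<Rightarrow> real \<Rightarrow> real" where
  "omega_inner P \<gamma> a = (LINT b:{a..pi}|lebesgue. P a b * cross2 (\<gamma> a) (\<gamma> b))"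

locale bounded_kernel =
  fixes P :: "real \<Rightarrow> real \<Rightarrow> real" and C :: real
  assumes measurable: "(\<lambda>x. P (fst x) (snd x)) \<in> borel_measurable (lebesgue \<Otimes>\<^sub>M lebesgue)"
    and bounded: "a \<le> b \<Longrightarrow> b \<le> a + pi \<Longrightarrow> \<bar>P a b\<bar> \<le> C"
begin

lemma bound_nonneg: "0 \<le> C"
  using bounded[of 0 0] by simp

lemma section_measurable: "P a \<in> borel_measurable lebesgue"
  using measurable_Pair2[OF measurable, of a] by simp

lemma omega_integrand_set_integrable:
  assumes "\<gamma> \<in> B_ap" "0 \<le> a"
  shows "set_integrable lebesgue {a..pi} (\<lambda>b. P a b * cross2 (\<gamma> a) (\<gamma> b))"
proof (rule set_integrable_bounded)
  show "(\<lambda>b. P a b * cross2 (\<gamma> a) (\<gamma> b)) \<in> borel_measurable lebesgue"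
    using B_apD(1)[OF assms(1)] section_measurable
    by (intro borel_measurable_times cross2_measurable) auto
  show "AE b in lebesgue. b \<in> {a..pi} \<longrightarrow> norm (P a b * cross2 (\<gamma> a) (\<gamma> b)) \<le> C * norm (\<gamma> a)"
    using B_apD(2)[OF assms(1)]
  proof eventually_elim
    case (elim b)
    have "\<bar>cross2 (\<gamma> a) (\<gamma> b)\<bar> \<le> norm (\<gamma> a)"
      using abs_cross2_le[of "\<gamma> a" "\<gamma> b"] elim mult_left_mono[OF elim, of "norm (\<gamma> a)"] by simp
    then show ?case
      using bounded[of a b] assms(2) bound_nonneg by (auto simp: abs_mult intro: mult_mono)
  qed
qed simp

lemma abs_omega_inner_le:
  assumes "\<gamma> \<in> B_ap" "0 \<le> a" "norm (\<gamma> a) \<le> 1"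
  shows "\<bar>omega_inner P \<gamma> a\<bar> \<le> C * pi"
  unfolding omega_inner_def real_norm_def[symmetric]
proof (rule norm_set_integral_le_nn_integral[OF omega_integrand_set_integrable[OF assms(1,2)]])
  show "AE b in lebesgue. b \<in> {a..pi} \<longrightarrow> norm (P a b * cross2 (\<gamma> a) (\<gamma> b)) \<le> C"
    using B_apD(2)[OF assms(1)]
  proof eventually_elim
    case (elim b)
    have "\<bar>cross2 (\<gamma> a) (\<gamma> b)\<bar> \<le> 1"
      using abs_cross2_le[of "\<gamma> a" "\<gamma> b"] mult_le_one[OF assms(3) norm_ge_zero elim] by linarith
    moreover have "b \<in> {a..pi} \<Longrightarrow> \<bar>P a b\<bar> \<le> C" using bounded[of a b] assms(2) by simp
    ultimately show ?case
      using mult_mono[of "\<bar>P a b\<bar>" C "\<bar>cross2 (\<gamma> a) (\<gamma> b)\<bar>" 1] bound_nonneg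
      by (simp add: abs_mult)
  qed
  show "(\<integral>\<^sup>+b\<in>{a..pi}. ennreal C \<partial>lebesgue) \<le> ennreal (C * pi)"
    using assms(2) bound_nonneg by (intro nn_set_integral_const_interval_le) auto
qed (use bound_nonneg in simp)

lemma omega_inner_measurable:
  assumes "\<gamma> \<in> B_ap"
  shows "omega_inner P \<gamma> \<in> borel_measurable lebesgue"
proof -
  note \<gamma> = B_apD(1)[OF assms]
  have "(\<lambda>x. indicator {fst x..pi} (snd x) :: real) \<in> borel_measurable (borel \<Otimes>\<^sub>M borel)"
    unfolding indicator_def atLeastAtMost_iff by measurable
  then have "(\<lambda>(a, b). indicator {a..pi} b *\<^sub>R (P a b * cross2 (\<gamma> a) (\<gamma> b)))
      \<in> borel_measurable (lebesgue \<Otimes>\<^sub>M lebesgue)"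
    unfolding split_beta'
    by (intro borel_measurable_scaleR borel_measurable_times measurable_lebesgue_pair_measure
        measurable cross2_measurable measurable_compose[OF measurable_fst \<gamma>]
        measurable_compose[OF measurable_snd \<gamma>])
  then show ?thesis
    unfolding omega_inner_def set_lebesgue_integral_def
    by (rule sigma_finite_measure.borel_measurable_lebesgue_integral[OF sigma_finite_lebesgue])
qed

lemma omega_inner_set_integrable:
  assumes "\<gamma> \<in> B_ap"
  shows "set_integrable lebesgue {0..pi} (omega_inner P \<gamma>)"
  by (rule set_integrable_bounded[OF omega_inner_measurable[OF assms], where C = "C * pi"])
     (use B_apD(2)[OF assms] abs_omega_inner_le[OF assms] in \<open>auto elim!: eventually_mono\<close>)

lemma abs_omega_le:
  assumes "\<gamma> \<in> B_ap"
  shows "\<bar>LINT a:{0..pi}|lebesgue. omega_inner P \<gamma> a\<bar> \<le> C * pi * pi"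
  unfolding real_norm_def[symmetric]
proof (rule norm_set_integral_le_nn_integral[OF omega_inner_set_integrable[OF assms]])
  show "AE a in lebesgue. a \<in> {0..pi} \<longrightarrow> norm (omega_inner P \<gamma> a) \<le> C * pi"
    using B_apD(2)[OF assms] abs_omega_inner_le[OF assms] by (auto elim!: eventually_mono)
  show "(\<integral>\<^sup>+a\<in>{0..pi}. ennreal (C * pi) \<partial>lebesgue) \<le> ennreal (C * pi * pi)"
    using bound_nonneg by (intro nn_set_integral_const_interval_le) auto
qed (use bound_nonneg in simp)

end

locale kernel_pair = P: bounded_kernel P C + Q: bounded_kernel Q C
  for P Q :: "real \<Rightarrow> real \<Rightarrow> real" and C :: real +
  fixes w :: "real \<Rightarrow> real" and D J :: real
  assumes diff_bounded: "a \<le> b \<Longrightarrow> b \<le> a + pi \<Longrightarrow> \<bar>P a b - Q a b\<bar> \<le> D * w (b - a)"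
    and weight_measurable: "w \<in> borel_measurable borel"
    and weight_nonneg: "0 \<le> w t"
    and weight_integral: "(\<integral>\<^sup>+t. ennreal (w t) \<partial>lebesgue) \<le> ennreal J"
    and D_nonneg: "0 \<le> D" and J_nonneg: "0 \<le> J"
begin

lemma nn_set_integral_diff_bound_le: "(\<integral>\<^sup>+b\<in>S. ennreal (D * w (b - a)) \<partial>lebesgue) \<le> ennreal (D * J)"
  using weight_measurable weight_nonneg weight_integral D_nonneg J_nonneg
  by (rule nn_set_integral_translated_weight_le)

lemma nn_integral_abs_diff_le:
  "(\<integral>\<^sup>+a\<in>{0..pi}. (\<integral>\<^sup>+b\<in>{a..pi}. ennreal \<bar>P a b - Q a b\<bar> \<partial>lebesgue) \<partial>lebesgue)
     \<le> ennreal (D * J * pi)"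
proof -
  have "(\<integral>\<^sup>+b\<in>{a..pi}. ennreal \<bar>P a b - Q a b\<bar> \<partial>lebesgue) \<le> ennreal (D * J)" if "0 \<le> a" for a
  proof -
    have "(\<integral>\<^sup>+b\<in>{a..pi}. ennreal \<bar>P a b - Q a b\<bar> \<partial>lebesgue)
        \<le> (\<integral>\<^sup>+b\<in>{a..pi}. ennreal (D * w (b - a)) \<partial>lebesgue)"
      using diff_bounded that by (intro nn_integral_mono) (auto simp: indicator_def ennreal_leI)
    also have "\<dots> \<le> ennreal (D * J)" by (rule nn_set_integral_diff_bound_le)
    finally show ?thesis .
  qed
  then have "(\<integral>\<^sup>+a\<in>{0..pi}. (\<integral>\<^sup>+b\<in>{a..pi}. ennreal \<bar>P a b - Q a b\<bar> \<partial>lebesgue) \<partial>lebesgue)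
      \<le> (\<integral>\<^sup>+a\<in>{0..pi}. ennreal (D * J) \<partial>lebesgue)"
    by (intro nn_integral_mono) (auto simp: indicator_def)
  also have "\<dots> \<le> ennreal (D * J * pi)"
    using D_nonneg J_nonneg by (intro nn_set_integral_const_interval_le) auto
  finally show ?thesis .
qed

lemma abs_omega_inner_diff_le:
  assumes "\<gamma> \<in> B_ap" "0 \<le> a" "norm (\<gamma> a) \<le> 1"
  shows "\<bar>omega_inner P \<gamma> a - omega_inner Q \<gamma> a\<bar> \<le> D * J"
proof -
  have "omega_inner P \<gamma> a - omega_inner Q \<gamma> a
      = (LINT b:{a..pi}|lebesgue. P a b * cross2 (\<gamma> a) (\<gamma> b) - Q a b * cross2 (\<gamma> a) (\<gamma> b))"
    unfolding omega_inner_def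
    by (rule set_integral_diff(2)[symmetric])
       (intro P.omega_integrand_set_integrable Q.omega_integrand_set_integrable assms)+
  also have "norm \<dots> \<le> D * J"
  proof (rule norm_set_integral_le_nn_integral[OF _ _ nn_set_integral_diff_bound_le])
    show "set_integrable lebesgue {a..pi} (\<lambda>b. P a b * cross2 (\<gamma> a) (\<gamma> b) - Q a b * cross2 (\<gamma> a) (\<gamma> b))"
      by (intro set_integral_diff(1) P.omega_integrand_set_integrable Q.omega_integrand_set_integrable assms)
    show "AE b in lebesgue. b \<in> {a..pi} \<longrightarrow>
        norm (P a b * cross2 (\<gamma> a) (\<gamma> b) - Q a b * cross2 (\<gamma> a) (\<gamma> b)) \<le> D * w (b - a)"
      using B_apD(2)[OF assms(1)]
    proof eventually_elim
      case (elim b)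
      have "\<bar>cross2 (\<gamma> a) (\<gamma> b)\<bar> \<le> 1"
        using abs_cross2_le[of "\<gamma> a" "\<gamma> b"] mult_le_one[OF assms(3) norm_ge_zero elim] by linarith
      moreover have "b \<in> {a..pi} \<Longrightarrow> \<bar>P a b - Q a b\<bar> \<le> D * w (b - a)"
        using diff_bounded[of a b] assms(2) by simp
      ultimately show ?case
        using mult_mono[of "\<bar>P a b - Q a b\<bar>" "D * w (b - a)" "\<bar>cross2 (\<gamma> a) (\<gamma> b)\<bar>" 1]
          D_nonneg weight_nonneg
        by (simp add: abs_mult left_diff_distrib[symmetric])
    qed
  qed (rule mult_nonneg_nonneg[OF D_nonneg J_nonneg])
  finally show ?thesis by simp
qed

lemma abs_omega_diff_le:
  assumes "\<gamma> \<in> B_ap"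
  shows "\<bar>(LINT a:{0..pi}|lebesgue. omega_inner P \<gamma> a) - (LINT a:{0..pi}|lebesgue. omega_inner Q \<gamma> a)\<bar>
    \<le> D * J * pi"
proof -
  note integrable = P.omega_inner_set_integrable[OF assms] Q.omega_inner_set_integrable[OF assms]
  have "norm (LINT a:{0..pi}|lebesgue. omega_inner P \<gamma> a - omega_inner Q \<gamma> a) \<le> D * J * pi"
  proof (rule norm_set_integral_le_nn_integral[OF set_integral_diff(1)[OF integrable]])
    show "AE a in lebesgue. a \<in> {0..pi} \<longrightarrow> norm (omega_inner P \<gamma> a - omega_inner Q \<gamma> a) \<le> D * J"
      using B_apD(2)[OF assms] abs_omega_inner_diff_le[OF assms] by (auto elim!: eventually_mono)
    show "(\<integral>\<^sup>+a\<in>{0..pi}. ennreal (D * J) \<partial>lebesgue) \<le> ennreal (D * J * pi)"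
      using D_nonneg J_nonneg by (intro nn_set_integral_const_interval_le) auto
  qed (use D_nonneg J_nonneg in simp)
  then show ?thesis by (simp add: set_integral_diff(2)[OF integrable])
qed

lemma norm_kernel_integral_diff_le:
  assumes "\<gamma> \<in> B_ap"
  shows "norm ((LINT b:{a..a+pi}|lebesgue. P a b *\<^sub>R \<gamma> b) - (LINT b:{a..a+pi}|lebesgue. Q a b *\<^sub>R \<gamma> b))
    \<le> D * J"
proof -
  have integrable: "set_integrable lebesgue {a..a+pi} (\<lambda>b. K a b *\<^sub>R \<gamma> b)"
    if "bounded_kernel K C" for K
  proof (rule set_integrable_bounded)
    interpret K: bounded_kernel K C by fact
    show "(\<lambda>b. K a b *\<^sub>R \<gamma> b) \<in> borel_measurable lebesgue"
      using K.section_measurable B_apD(1)[OF assms] by (intro borel_measurable_scaleR) auto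
    show "AE b in lebesgue. b \<in> {a..a+pi} \<longrightarrow> norm (K a b *\<^sub>R \<gamma> b) \<le> C"
      using B_apD(2)[OF assms]
      by eventually_elim (use K.bounded K.bound_nonneg in \<open>auto intro: mult_le_one mult_mono' [of _ C _ 1, simplified]\<close>)
  qed simp
  note integrable = integrable[OF P.bounded_kernel_axioms] integrable[OF Q.bounded_kernel_axioms]
  have "norm (LINT b:{a..a+pi}|lebesgue. P a b *\<^sub>R \<gamma> b - Q a b *\<^sub>R \<gamma> b) \<le> D * J"
  proof (rule norm_set_integral_le_nn_integral[OF set_integral_diff(1)[OF integrable] _ nn_set_integral_diff_bound_le])
    show "AE b in lebesgue. b \<in> {a..a+pi} \<longrightarrow> norm (P a b *\<^sub>R \<gamma> b - Q a b *\<^sub>R \<gamma> b) \<le> D * w (b - a)"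
      using B_apD(2)[OF assms]
    proof eventually_elim
      case (elim b)
      have "norm (P a b *\<^sub>R \<gamma> b - Q a b *\<^sub>R \<gamma> b) = \<bar>P a b - Q a b\<bar> * norm (\<gamma> b)"
        by (simp add: scaleR_diff_left[symmetric])
      then show ?case
        using diff_bounded[of a b] mult_mono[of "\<bar>P a b - Q a b\<bar>" "D * w (b - a)" "norm (\<gamma> b)" 1]
          elim D_nonneg weight_nonneg
        by auto
    qed
  qed (use D_nonneg J_nonneg in simp)
  then show ?thesis by (simp add: set_integral_diff(2)[OF integrable])
qed

end

lemma abs_SUP_diff_le:
  fixes F G :: "'a \<Rightarrow> real"
  assumes "A \<noteq> {}" "bdd_above (F ` A)" "bdd_above (G ` A)" "\<And>x. x \<in> A \<Longrightarrow> \<bar>F x - G x\<bar> \<le> E"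
  shows "\<bar>(SUP x\<in>A. F x) - (SUP x\<in>A. G x)\<bar> \<le> E"
proof -
  have "(SUP x\<in>A. F' x) \<le> (SUP x\<in>A. G' x) + E"
    if "bdd_above (G' ` A)" "\<And>x. x \<in> A \<Longrightarrow> F' x \<le> G' x + E" for F' G' :: "'a \<Rightarrow> real"
  proof (rule cSUP_least[OF assms(1)])
    fix x assume "x \<in> A"
    then show "F' x \<le> (SUP x\<in>A. G' x) + E"
      using that cSUP_upper[of x A G'] by fastforce
  qed
  from this[of G F] this[of F G] show ?thesis
    using assms(2-4) by (fastforce simp: abs_le_iff)
qed

lemma omega_eq_omega_inner: "omega f \<gamma> = (LINT a:{0..pi}|lebesgue. omega_inner (p_ab f) \<gamma> a)"
  unfolding omega_def omega_inner_def ..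

lemma bdd_above_omega:
  assumes "bounded_kernel (p_ab f) C"
  shows "bdd_above (omega f ` B_ap)"
proof (rule bdd_aboveI2)
  fix \<gamma> assume "\<gamma> \<in> B_ap"
  from bounded_kernel.abs_omega_le[OF assms this]
  show "omega f \<gamma> \<le> C * pi * pi" by (simp add: omega_eq_omega_inner)
qed

lemma abs_omega_ir_diff_le:
  assumes "bounded_kernel (p_ab f) C" "bounded_kernel (p_ab g) C"
    and "\<And>\<gamma>. \<gamma> \<in> B_ap \<Longrightarrow> \<bar>omega f \<gamma> - omega g \<gamma>\<bar> \<le> E"
  shows "\<bar>omega_ir f - omega_ir g\<bar> \<le> E"
proof -
  have "(\<lambda>_. 0) \<in> B_ap" by (simp add: B_ap_def)
  then show ?thesis
    unfolding omega_ir_def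
    by (intro abs_SUP_diff_le bdd_above_omega[OF assms(1)] bdd_above_omega[OF assms(2)] assms(3)) auto
qed

lemma E_r_kernel_pairs:
  assumes "0 < r" "r < pi/2" "0 < \<xi>" "\<xi> < 1"
  obtains K J C where "0 \<le> K" "0 \<le> J"
    and "\<And>h. h \<in> E_r r \<Longrightarrow> bounded_kernel (p_ab h) C"
    and "\<And>f g. f \<in> E_r r \<Longrightarrow> g \<in> E_r r \<Longrightarrow>
           kernel_pair (p_ab f) (p_ab g) C (edge_weight \<xi>) (K * sup_dist f g powr \<xi>) J"
    and "\<And>f g. f \<in> E_r r \<Longrightarrow> g \<in> E_r r \<Longrightarrow>
           kernel_pair (q_ab f) (q_ab g) C (edge_weight \<xi>) (K * sup_dist f g powr \<xi>) J"
proof -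
  define C where "C = pi\<^sup>2 / sin r ^ 4"
  define K where "K = (2 * (pi\<^sup>2 / sin r ^ 4)) powr (1 - \<xi>)
    * (4 * pi\<^sup>2 * (pi\<^sup>2 + pi) / (sin r ^ 4)\<^sup>2) powr \<xi>"
  define J where "J = 2 * (pi powr (1 - \<xi>) / (1 - \<xi>))"
  note estimates = E_r_kernel_estimates_at[OF assms, folded C_def K_def]
  have J: "0 \<le> J" "(\<integral>\<^sup>+t. ennreal (edge_weight \<xi> t) \<partial>lebesgue) \<le> ennreal J"
    using assms(3,4) by (simp_all add: J_def nn_integral_edge_weight)
  have kernels: "bounded_kernel (p_ab h) C" "bounded_kernel (q_ab h) C" if "h \<in> E_r r" for h
    using p_ab_q_ab_measurable[OF E_r_borel_measurable[OF that]] estimates(1,2)[OF that that]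
    by (blast intro: bounded_kernel.intro)+
  have "0 \<le> K" by (simp add: K_def)
  have pairs: "kernel_pair (p_ab f) (p_ab g) C (edge_weight \<xi>) (K * sup_dist f g powr \<xi>) J"
    "kernel_pair (q_ab f) (q_ab g) C (edge_weight \<xi>) (K * sup_dist f g powr \<xi>) J"
    if "f \<in> E_r r" "g \<in> E_r r" for f g
    using kernels that estimates(3,4)[OF that] J \<open>0 \<le> K\<close>
    by (simp_all add: kernel_pair_def kernel_pair_axioms_def edge_weight_nonneg edge_weight_measurable)
  show ?thesis by (rule that[OF \<open>0 \<le> K\<close> J(1) kernels(1) pairs])
qed

theorem lemma4p8:
  fixes \<xi> r :: real
  assumes "0 < \<xi>" "\<xi> < 1" "0 < r" "r < pi / 2"
  shows "\<exists>H>0. \<forall>\<gamma>\<in>B_ap. \<forall>f\<in>E_r r. \<forall>g\<in>E_r r.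
     (\<integral>\<^sup>+ a\<in>{0..pi}. (\<integral>\<^sup>+ b\<in>{a..pi}. ennreal \<bar>p_ab f a b - p_ab g a b\<bar> \<partial>lebesgue) \<partial>lebesgue)
        \<le> ennreal (H * sup_dist f g powr \<xi>)
   \<and> \<bar>omega f \<gamma> - omega g \<gamma>\<bar> \<le> H * sup_dist f g powr \<xi>
   \<and> \<bar>omega_ir f - omega_ir g\<bar> \<le> H * sup_dist f g powr \<xi>
   \<and> (\<forall>a. norm (mu f \<gamma> a - mu g \<gamma> a) \<le> H * sup_dist f g powr \<xi>)"
proof -
  obtain K J C where "0 \<le> K" "0 \<le> J" and kernels: "\<And>h. h \<in> E_r r \<Longrightarrow> bounded_kernel (p_ab h) C"
    and pairs: "\<And>f g. f \<in> E_r r \<Longrightarrow> g \<in> E_r r \<Longrightarrow>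
           kernel_pair (p_ab f) (p_ab g) C (edge_weight \<xi>) (K * sup_dist f g powr \<xi>) J"
      "\<And>f g. f \<in> E_r r \<Longrightarrow> g \<in> E_r r \<Longrightarrow>
           kernel_pair (q_ab f) (q_ab g) C (edge_weight \<xi>) (K * sup_dist f g powr \<xi>) J"
    by (fact E_r_kernel_pairs[OF assms(3,4,1,2)])
  define H where "H = K * J * pi + 1"
  show ?thesis
  proof (intro exI[of _ H] conjI ballI allI)
    show "0 < H" using \<open>0 \<le> K\<close> \<open>0 \<le> J\<close> by (simp add: H_def add_nonneg_pos)
    fix \<gamma> f g assume \<gamma>: "\<gamma> \<in> B_ap" and fg: "f \<in> E_r r" "g \<in> E_r r"
    interpret p: kernel_pair "p_ab f" "p_ab g" C "edge_weight \<xi>" "K * sup_dist f g powr \<xi>" J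
      using pairs(1)[OF fg] .
    interpret q: kernel_pair "q_ab f" "q_ab g" C "edge_weight \<xi>" "K * sup_dist f g powr \<xi>" J
      using pairs(2)[OF fg] .
    define E where "E = K * sup_dist f g powr \<xi> * J"
    have "0 \<le> E" using \<open>0 \<le> K\<close> \<open>0 \<le> J\<close> by (simp add: E_def)
    then have E_le: "E \<le> E * pi" "E * pi \<le> H * sup_dist f g powr \<xi>"
      using mult_left_mono[of 1 pi E] pi_gt3 by (simp_all add: E_def H_def algebra_simps)
    have omega_diff: "\<bar>omega f \<gamma>' - omega g \<gamma>'\<bar> \<le> E * pi" if "\<gamma>' \<in> B_ap" for \<gamma>'
      using p.abs_omega_diff_le[OF that] by (simp add: omega_eq_omega_inner E_def)
    show "(\<integral>\<^sup>+ a\<in>{0..pi}. (\<integral>\<^sup>+ b\<in>{a..pi}. ennreal \<bar>p_ab f a b - p_ab g a b\<bar> \<partial>lebesgue) \<partial>lebesgue)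
        \<le> ennreal (H * sup_dist f g powr \<xi>)"
      using p.nn_integral_abs_diff_le ennreal_leI[OF E_le(2)] unfolding E_def by (rule order_trans)
    show "\<bar>omega f \<gamma> - omega g \<gamma>\<bar> \<le> H * sup_dist f g powr \<xi>"
      using omega_diff[OF \<gamma>] E_le(2) by linarith
    show "\<bar>omega_ir f - omega_ir g\<bar> \<le> H * sup_dist f g powr \<xi>"
      using abs_omega_ir_diff_le[OF kernels[OF fg(1)] kernels[OF fg(2)] omega_diff] E_le(2) by linarith
    show "norm (mu f \<gamma> a - mu g \<gamma> a) \<le> H * sup_dist f g powr \<xi>" for a
      using q.norm_kernel_integral_diff_le[OF \<gamma>, of a] E_le by (simp add: mu_def E_def)
  qed
qed

end
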